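(* $\mathrm{add}(\mathcal{M})\leq\mathfrak{a}(nwd)$.
   Context: $\mathcal{M}$ is the ideal of meager subsets of $2^\omega$ and $\mathrm{add}(\mathcal{M})$ its additivity. $nwd$ is the ideal on $2^{<\omega}$ of nowhere dense sets: $A\in nwd$ iff for every $\sigma\in2^{<\omega}$ there is $\tau\supseteq\sigma$ such that no extension of $\tau$ belongs to $A$. For an ideal $\mathcal{J}$, $\mathfrak{a}(\mathcal{J})$ is the smallest size of an uncountable family $\mathcal{A}$ of $\mathcal{J}$-positive sets which is maximal with respect to the property that $A\cap B\in\mathcal{J}$ for all distinct $A,B\in\mathcal{A}$. *)

theory Defs
  imports "HOL-Analysis.Analysis"
begin

text \<open>The Cantor space 2^omega is the type nat => bool with the product topology
  (bool carries the discrete topology).\<close>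

definition nowhere_dense :: "(nat \<Rightarrow> bool) set \<Rightarrow> bool" where
  "nowhere_dense X \<longleftrightarrow> interior (closure X) = {}"

definition meager :: "(nat \<Rightarrow> bool) set \<Rightarrow> bool" where
  "meager X \<longleftrightarrow> (\<exists>N :: nat \<Rightarrow> (nat \<Rightarrow> bool) set.
      (\<forall>n. nowhere_dense (N n)) \<and> X \<subseteq> (\<Union>n. N n))"

text \<open>Families witnessing add(M): families of meager sets whose union is not meager.
  add(M) is the least cardinality of such a family.\<close>

definition add_M_family :: "(nat \<Rightarrow> bool) set set \<Rightarrow> bool" where
  "add_M_family F \<longleftrightarrow> (\<forall>X\<in>F. meager X) \<and> \<not> meager (\<Union>F)"

text \<open>The ideal nwd on 2^{<omega} (finite binary sequences as bool lists);
  tau extends sigma iff sigma is a prefix of tau.\<close>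

definition nwd :: "bool list set set" where
  "nwd = {A. \<forall>\<sigma>. \<exists>\<tau>. (\<exists>u. \<tau> = \<sigma> @ u) \<and> (\<forall>\<rho>. (\<exists>v. \<rho> = \<tau> @ v) \<longrightarrow> \<rho> \<notin> A)}"

text \<open>Uncountable maximal J-almost disjoint families of J-positive sets;
  a(J) is the least cardinality of such a family.\<close>

definition uncountable_mad :: "'a set set \<Rightarrow> 'a set set \<Rightarrow> bool" where
  "uncountable_mad J \<A> \<longleftrightarrow>
     uncountable \<A> \<and>
     (\<forall>A\<in>\<A>. A \<notin> J) \<and>
     (\<forall>A\<in>\<A>. \<forall>B\<in>\<A>. A \<noteq> B \<longrightarrow> A \<inter> B \<in> J) \<and>
     (\<forall>B. B \<notin> J \<and> B \<notin> \<A> \<longrightarrow> (\<exists>A\<in>\<A>. A \<inter> B \<notin> J))"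

end

theory Submission
  imports Defs
begin

(* Suppose an uncountable MAD family \<A> had size below add(M). Every nwd-positive set is dense
  above some node, so infinitely many members a_0, a_1, ... of \<A> are dense above a common node
  \<sigma>. Below add(M), |\<A>| many dense open sets D_{A,k} of nodes are met for almost all k by a
  single sequence w_k: a point of Cantor space outside |\<A>| many meager sets provides witnesses,
  and covering one more meager family by countably many nowhere dense sets yields an interval
  partition that eventually bounds their lengths. With t_k enumerating all nodes, let D_{A,k}
  consist of the u such that no extension of \<sigma> t_k u lies in A \<inter> a_k (for A \<noteq> a_k), and pick
  \<rho>_k \<in> a_k extending \<sigma> t_k w_k. Then {\<rho>_k} is dense above \<sigma>, yet meets every A \<in> \<A> in a
  finite set, contradicting maximality. *)

section \<open>Cylinders and nowhere dense subsets of Cantor space\<close>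

definition cylinder :: "bool list \<Rightarrow> (nat \<Rightarrow> bool) set" where
  "cylinder s = {x. \<forall>i<length s. x i = s ! i}"

definition initial_segment :: "(nat \<Rightarrow> bool) \<Rightarrow> nat \<Rightarrow> bool list" where
  "initial_segment x n = map x [0..<n]"

definition avoidable :: "(nat \<Rightarrow> bool) set \<Rightarrow> bool" where
  "avoidable Z \<longleftrightarrow> (\<forall>s. \<exists>u. cylinder (s @ u) \<inter> Z = {})"

lemma open_cylinder: "open (cylinder s)"
proof -
  have "cylinder s = {x. \<forall>i\<in>{..<length s}. x (id i) \<in> {s ! i}}"
    unfolding cylinder_def by auto
  also have "open \<dots>"
    by (rule product_topology_basis') (auto intro: open_discrete)
  finally show ?thesis .
qed

lemma length_initial_segment [simp]: "length (initial_segment x n) = n"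
  by (simp add: initial_segment_def)

lemma nth_initial_segment [simp]: "i < n \<Longrightarrow> initial_segment x n ! i = x i"
  by (simp add: initial_segment_def)

lemma cylinder_nonempty: "cylinder s \<noteq> {}"
proof -
  have "(\<lambda>i. i < length s \<and> s ! i) \<in> cylinder s"
    by (simp add: cylinder_def)
  then show ?thesis by blast
qed

lemma cylinder_append_subset: "cylinder (s @ u) \<subseteq> cylinder s"
  by (auto simp: cylinder_def nth_append)

lemma initial_segment_of_cylinder: "x \<in> cylinder s \<Longrightarrow> initial_segment x (length s) = s"
  by (intro nth_equalityI) (auto simp: cylinder_def)

lemma initial_segment_append: "m \<le> n \<Longrightarrow> \<exists>u. initial_segment x n = initial_segment x m @ u"
  unfolding initial_segment_def by (metis le_add_diff_inverse map_append upt_add_eq_append zero_le)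

lemma initial_segment_extends:
  "x \<in> cylinder s \<Longrightarrow> length s \<le> n \<Longrightarrow> \<exists>u. initial_segment x n = s @ u"
  using initial_segment_append initial_segment_of_cylinder by metis

lemma open_contains_cylinder:
  assumes "open U" "x \<in> U"
  shows "\<exists>n. cylinder (initial_segment x n) \<subseteq> U"
proof -
  have "openin (product_topology (\<lambda>i. euclidean) UNIV) U"
    using assms by (simp add: open_fun_def)
  from product_topology_open_contains_basis[OF this assms(2)]
  obtain X where X: "x \<in> (\<Pi>\<^sub>E i\<in>UNIV. X i)" "finite {i. X i \<noteq> UNIV}" "(\<Pi>\<^sub>E i\<in>UNIV. X i) \<subseteq> U"
    by auto
  obtain n where n: "\<And>i. X i \<noteq> UNIV \<Longrightarrow> i < n"
    using finite_nat_bounded[OF X(2)] by blast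
  have "y \<in> (\<Pi>\<^sub>E i\<in>UNIV. X i)" if y: "y \<in> cylinder (initial_segment x n)" for y
  proof -
    have "y i \<in> X i" for i
    proof (cases "X i = UNIV")
      case False
      then have "y i = x i" using y n by (auto simp: cylinder_def)
      then show ?thesis using X(1) by auto
    qed auto
    then show ?thesis by auto
  qed
  then show ?thesis using X(3) by blast
qed

lemma avoidable_if_nowhere_dense:
  assumes "nowhere_dense Z" shows "avoidable Z"
  unfolding avoidable_def
proof
  fix s
  have "\<not> cylinder s \<subseteq> closure Z"
    using assms open_cylinder cylinder_nonempty interior_maximal
    unfolding nowhere_dense_def by blast
  then obtain x where x: "x \<in> cylinder s" "x \<notin> closure Z" by blast
  then obtain n where n: "cylinder (initial_segment x n) \<subseteq> - closure Z"
    using open_contains_cylinder[of "- closure Z" x] by blast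
  obtain u where u: "initial_segment x (n + length s) = s @ u"
    using initial_segment_extends[OF x(1)] by fastforce
  obtain v where "initial_segment x (n + length s) = initial_segment x n @ v"
    using initial_segment_append le_add1 by blast
  then have "cylinder (s @ u) \<subseteq> cylinder (initial_segment x n)"
    using u cylinder_append_subset by metis
  then show "\<exists>u. cylinder (s @ u) \<inter> Z = {}"
    using n closure_subset by blast
qed

lemma nowhere_dense_if_avoidable:
  assumes "avoidable Z" shows "nowhere_dense Z"
  unfolding nowhere_dense_def
proof (rule ccontr)
  assume "interior (closure Z) \<noteq> {}"
  then obtain x where "x \<in> interior (closure Z)" by blast
  then obtain n where n: "cylinder (initial_segment x n) \<subseteq> closure Z"
    using open_contains_cylinder[OF open_interior] interior_subset by blast
  obtain u where "cylinder (initial_segment x n @ u) \<inter> Z = {}"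
    using assms by (auto simp: avoidable_def)
  then have "cylinder (initial_segment x n @ u) \<inter> closure Z = {}"
    using open_cylinder open_Int_closure_eq_empty by blast
  then show False
    using n cylinder_append_subset cylinder_nonempty by blast
qed

lemma nowhere_dense_iff_avoidable: "nowhere_dense Z \<longleftrightarrow> avoidable Z"
  using avoidable_if_nowhere_dense nowhere_dense_if_avoidable by blast

lemma meager_iff_avoidable:
  "meager X \<longleftrightarrow> (\<exists>N :: nat \<Rightarrow> (nat \<Rightarrow> bool) set. (\<forall>n. avoidable (N n)) \<and> X \<subseteq> (\<Union>n. N n))"
  by (simp add: meager_def nowhere_dense_iff_avoidable)

lemma avoidable_Un:
  assumes "avoidable Y" "avoidable Z" shows "avoidable (Y \<union> Z)"
  unfolding avoidable_def
proof
  fix s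
  obtain u where u: "cylinder (s @ u) \<inter> Y = {}"
    using assms(1) by (auto simp: avoidable_def)
  obtain v where v: "cylinder ((s @ u) @ v) \<inter> Z = {}"
    using assms(2) unfolding avoidable_def by blast
  have "cylinder (s @ u @ v) \<inter> Y = {}"
    using u cylinder_append_subset[of "s @ u" v] by auto
  with v show "\<exists>u. cylinder (s @ u) \<inter> (Y \<union> Z) = {}"
    by (intro exI[of _ "u @ v"]) auto
qed

lemma avoidable_UN_atMost: "(\<And>n. avoidable (N n)) \<Longrightarrow> avoidable (\<Union>n\<le>(i::nat). N n)"
proof (induction i)
  case (Suc i)
  have "(\<Union>n\<le>Suc i. N n) = (\<Union>n\<le>i. N n) \<union> N (Suc i)"
    by (auto simp: le_Suc_eq)
  then show ?case using Suc avoidable_Un by metis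
qed simp

lemma avoidable_simultaneously:
  assumes "finite S" "avoidable Z"
  shows "\<exists>u. \<forall>s\<in>S. cylinder (s @ u) \<inter> Z = {}"
  using assms(1)
proof (induction S)
  case (insert s S)
  then obtain u where u: "\<forall>s\<in>S. cylinder (s @ u) \<inter> Z = {}" by blast
  obtain v where v: "cylinder ((s @ u) @ v) \<inter> Z = {}"
    using assms(2) unfolding avoidable_def by blast
  have "\<forall>s'\<in>S. cylinder (s' @ u @ v) \<inter> Z = {}"
    using u cylinder_append_subset by (metis append.assoc disjoint_iff subsetD)
  with v show ?case by (intro exI[of _ "u @ v"]) auto
qed simp

section \<open>Interval partitions attached to a meager set\<close>

text \<open>For avoidable sets N n the positions are cut into consecutive blocks
  [block_start N i, block_start N (Suc i)), filled by the word block N i: whatever word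
  precedes it, this block leads out of N 0, ..., N i. Each block ends in True, and
  block_point N S is True outside the blocks with index in S.\<close>

definition avoiding_extension :: "(nat \<Rightarrow> (nat \<Rightarrow> bool) set) \<Rightarrow> nat \<Rightarrow> nat \<Rightarrow> bool list" where
  "avoiding_extension N i j =
     (SOME u. \<forall>s. length s = j \<longrightarrow> cylinder (s @ u) \<inter> (\<Union>n\<le>i. N n) = {})"

primrec block_start :: "(nat \<Rightarrow> (nat \<Rightarrow> bool) set) \<Rightarrow> nat \<Rightarrow> nat" where
  "block_start N 0 = 0"
| "block_start N (Suc i) =
     Suc (block_start N i + length (avoiding_extension N i (block_start N i)))"

definition block :: "(nat \<Rightarrow> (nat \<Rightarrow> bool) set) \<Rightarrow> nat \<Rightarrow> bool list" where
  "block N i = avoiding_extension N i (block_start N i) @ [True]"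

definition block_index :: "(nat \<Rightarrow> (nat \<Rightarrow> bool) set) \<Rightarrow> nat \<Rightarrow> nat" where
  "block_index N p = (LEAST i. p < block_start N (Suc i))"

definition block_point :: "(nat \<Rightarrow> (nat \<Rightarrow> bool) set) \<Rightarrow> nat set \<Rightarrow> nat \<Rightarrow> bool" where
  "block_point N S p =
     (let i = block_index N p in if i \<in> S then block N i ! (p - block_start N i) else True)"

lemma block_start_Suc: "block_start N (Suc i) = block_start N i + length (block N i)"
  by (simp add: block_def)

declare block_start.simps(2) [simp del]

lemma strict_mono_block_start: "strict_mono (block_start N)"
  unfolding strict_mono_Suc_iff by (simp add: block_start_Suc block_def)

lemma block_start_less_iff [simp]: "block_start N i < block_start N j \<longleftrightarrow> i < j"
  by (rule strict_mono_less[OF strict_mono_block_start])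

lemma block_start_le_iff [simp]: "block_start N i \<le> block_start N j \<longleftrightarrow> i \<le> j"
  by (rule strict_mono_less_eq[OF strict_mono_block_start])

lemma le_block_start: "i \<le> block_start N i"
  by (rule strict_mono_imp_increasing[OF strict_mono_block_start])

lemma block_index_bounds:
  "block_start N (block_index N p) \<le> p \<and> p < block_start N (Suc (block_index N p))"
proof
  have "p < block_start N (Suc p)"
    using le_block_start[of "Suc p" N] by simp
  then show "p < block_start N (Suc (block_index N p))"
    unfolding block_index_def by (rule LeastI)
  show "block_start N (block_index N p) \<le> p"
  proof (cases "block_index N p")
    case (Suc i)
    then have "\<not> p < block_start N (Suc i)"
      unfolding block_index_def by (metis lessI not_less_Least)
    then show ?thesis using Suc by simp
  qed simp
qed

lemma block_index_eqI:
  assumes "block_start N i \<le> p" "p < block_start N (Suc i)"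
  shows "block_index N p = i"
proof -
  have "block_start N (block_index N p) < block_start N (Suc i)"
       "block_start N i < block_start N (Suc (block_index N p))"
    using assms block_index_bounds[of N p] by linarith+
  then show ?thesis by simp
qed

lemma block_point_in_cylinder:
  assumes "i \<in> S"
  shows "block_point N S \<in> cylinder (initial_segment (block_point N S) (block_start N i) @ block N i)"
  unfolding cylinder_def
proof (intro CollectI allI impI)
  fix q assume q: "q < length (initial_segment (block_point N S) (block_start N i) @ block N i)"
  show "block_point N S q = (initial_segment (block_point N S) (block_start N i) @ block N i) ! q"
  proof (cases "q < block_start N i")
    case False
    then have "block_index N q = i"
      using q by (intro block_index_eqI) (auto simp: block_start_Suc)
    then show ?thesis using False assms by (simp add: block_point_def nth_append)
  qed (simp add: nth_append)
qed

lemma block_point_block_end: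
  assumes "i \<in> S" shows "block_point N S (block_start N (Suc i) - 1)"
proof -
  let ?e = "block_start N (Suc i) - 1"
  let ?m = "length (avoiding_extension N i (block_start N i))"
  have "block_index N ?e = i" and "?e - block_start N i = ?m"
    by (auto intro!: block_index_eqI simp: block_start_Suc block_def)
  then show ?thesis
    using assms by (simp add: block_point_def block_def nth_append)
qed

lemma block_point_outside: "block_index N p \<notin> S \<Longrightarrow> block_point N S p"
  by (simp add: block_point_def)

context
  fixes N :: "nat \<Rightarrow> (nat \<Rightarrow> bool) set"
  assumes avoidable_N: "\<And>n. avoidable (N n)"
begin

lemma block_avoids:
  assumes "length s = block_start N i"
  shows "cylinder (s @ block N i) \<inter> (\<Union>n\<le>i. N n) = {}"
proof -
  have "finite {s :: bool list. length s = block_start N i}"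
    using finite_lists_length_eq[of "UNIV :: bool set"] by simp
  from avoidable_simultaneously[OF this avoidable_UN_atMost[OF avoidable_N]]
  have "\<exists>u. \<forall>s. length s = block_start N i \<longrightarrow> cylinder (s @ u) \<inter> (\<Union>n\<le>i. N n) = {}"
    by simp
  then have "\<forall>s. length s = block_start N i \<longrightarrow>
      cylinder (s @ avoiding_extension N i (block_start N i)) \<inter> (\<Union>n\<le>i. N n) = {}"
    unfolding avoiding_extension_def by (rule someI_ex)
  then show ?thesis
    using assms cylinder_append_subset[of "s @ avoiding_extension N i (block_start N i)" "[True]"]
    by (auto simp: block_def)
qed

lemma block_point_notin:
  assumes "infinite S" shows "block_point N S \<notin> N n"
proof
  assume x: "block_point N S \<in> N n"
  obtain i where i: "i \<in> S" "n \<le> i"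
    using assms infinite_nat_iff_unbounded_le by blast
  let ?s = "initial_segment (block_point N S) (block_start N i)"
  have "block_point N S \<in> cylinder (?s @ block N i)"
    using block_point_in_cylinder[OF i(1)] .
  moreover have "cylinder (?s @ block N i) \<inter> (\<Union>n\<le>i. N n) = {}"
    using block_avoids[of ?s i] by simp
  moreover have "block_point N S \<in> (\<Union>n\<le>i. N n)"
    using x i(2) by auto
  ultimately show False
    by (meson disjoint_iff)
qed

end

theorem not_meager_UNIV: "\<not> meager UNIV"
proof
  assume "meager UNIV"
  then obtain N :: "nat \<Rightarrow> (nat \<Rightarrow> bool) set" where "\<And>n. avoidable (N n)" "UNIV \<subseteq> (\<Union>n. N n)"
    unfolding meager_iff_avoidable by blast
  then show False using block_point_notin[of N UNIV] by blast
qed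

definition true_in_intervals :: "(nat \<Rightarrow> nat) \<Rightarrow> (nat \<Rightarrow> bool) set" where
  "true_in_intervals f = {x. \<forall>\<^sub>F n in sequentially. \<exists>i\<in>{n..<f n}. x i}"

lemma meager_true_in_intervals: "meager (true_in_intervals f)"
proof -
  define C where "C K = {x. \<forall>n\<ge>K. \<exists>i\<in>{n..<f n}. x i}" for K
  have "avoidable (C K)" for K
    unfolding avoidable_def
  proof
    fix s :: "bool list"
    let ?n = "max K (length s)"
    let ?u = "replicate (f ?n - length s) False"
    have "x \<notin> C K" if x: "x \<in> cylinder (s @ ?u)" for x
    proof
      assume "x \<in> C K"
      then have "\<exists>i\<in>{?n..<f ?n}. x i"
        unfolding C_def by simp
      then obtain i where i: "?n \<le> i" "i < f ?n" "x i"
        by auto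
      then have "x i = (s @ ?u) ! i" using x by (auto simp: cylinder_def)
      also have "\<dots> = False" using i by (auto simp: nth_append)
      finally show False using i(3) by simp
    qed
    then show "\<exists>u. cylinder (s @ u) \<inter> C K = {}" by blast
  qed
  moreover have "true_in_intervals f \<subseteq> (\<Union>K. C K)"
    unfolding true_in_intervals_def C_def eventually_sequentially by blast
  ultimately show ?thesis
    unfolding meager_iff_avoidable by blast
qed

text \<open>If block j contains some k with block_start N (k + 2) < f k, then the selected block
  Suc j ends with True before position f k, hence before f n for each of its positions n.\<close>

lemma block_point_in_true_in_intervals:
  assumes mono: "strict_mono f" and above: "\<And>n. n < f n"
  shows "block_point N {Suc (block_index N k) | k. block_start N (k + 2) < f k} \<in> true_in_intervals f"
    (is "block_point N ?S \<in> _")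
proof -
  have "\<exists>i\<in>{n..<f n}. block_point N ?S i" for n
  proof (cases "block_index N n \<in> ?S")
    case True
    then obtain k where k: "block_index N n = Suc (block_index N k)" "block_start N (k + 2) < f k"
      by blast
    let ?e = "block_start N (Suc (block_index N n)) - 1"
    have "block_start N (block_index N k) \<le> k" "k < block_start N (Suc (block_index N k))"
      "block_start N (block_index N n) \<le> n" "n < block_start N (Suc (block_index N n))"
      using block_index_bounds by blast+
    then have "k \<le> n" "block_index N k \<le> k"
      using k(1) le_block_start[of "block_index N k" N] by simp_all
    then have "block_start N (Suc (block_index N n)) \<le> block_start N (k + 2)"
      and "f k \<le> f n"
      using k(1) strict_mono_less_eq[OF mono] by simp_all
    then have "?e < f n"
      using k(2) by linarith
    moreover have "n \<le> ?e"
      using \<open>n < block_start N (Suc (block_index N n))\<close> by simp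
    ultimately show ?thesis
      using block_point_block_end[where N = N, OF True] by auto
  next
    case False
    then show ?thesis
      using block_point_outside[OF False] above[of n] by auto
  qed
  then show ?thesis by (simp add: true_in_intervals_def)
qed

lemma eventually_le_block_start:
  assumes avoidable_N: "\<And>n. avoidable (N n)"
    and mono: "strict_mono f" and above: "\<And>n. n < f n"
    and cover: "true_in_intervals f \<subseteq> (\<Union>n. N n)"
  shows "\<forall>\<^sub>F k in sequentially. f k \<le> block_start N (k + 2)"
proof (rule ccontr)
  define S where "S = {Suc (block_index N k) | k. block_start N (k + 2) < f k}"
  assume "\<not> ?thesis"
  then have often: "\<forall>K. \<exists>k\<ge>K. block_start N (k + 2) < f k"
    by (auto simp: eventually_sequentially not_le)
  have "infinite S"
    unfolding infinite_nat_iff_unbounded_le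
  proof
    fix m
    obtain k where k: "block_start N m \<le> k" "block_start N (k + 2) < f k"
      using often by blast
    then have "block_start N m < block_start N (Suc (block_index N k))"
      using block_index_bounds[of N k] by linarith
    then have "m \<le> Suc (block_index N k)" by simp
    then show "\<exists>i\<ge>m. i \<in> S"
      using k(2) unfolding S_def by blast
  qed
  then have "block_point N S \<notin> N n" for n
    by (rule block_point_notin[OF avoidable_N])
  moreover have "block_point N S \<in> true_in_intervals f"
    unfolding S_def by (rule block_point_in_true_in_intervals[OF mono above])
  ultimately show False
    using cover by auto
qed

section \<open>Cardinals below add(M)\<close>

definition below_add_M :: "'a set \<Rightarrow> bool" where
  "below_add_M A \<longleftrightarrow> (\<forall>F. (\<forall>X\<in>F. meager X) \<and> (card_of F, card_of A) \<in> ordLeq \<longrightarrow> meager (\<Union>F))"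

lemma meager_UN_below_add_M:
  "below_add_M A \<Longrightarrow> (\<And>\<alpha>. \<alpha> \<in> A \<Longrightarrow> meager (Z \<alpha>)) \<Longrightarrow> meager (\<Union>\<alpha>\<in>A. Z \<alpha>)"
  using card_of_image[of Z A] unfolding below_add_M_def by blast

lemma generic_point_below_add_M:
  fixes D :: "'a \<Rightarrow> nat \<Rightarrow> bool list set"
  assumes "below_add_M A" and dense: "\<And>\<alpha> k s. \<alpha> \<in> A \<Longrightarrow> \<exists>u. s @ u \<in> D \<alpha> k"
  shows "\<exists>x. \<forall>\<alpha>\<in>A. \<forall>k. \<exists>l. initial_segment x l \<in> D \<alpha> k"
proof -
  define Miss where "Miss \<alpha> = (\<Union>k. - {x. \<exists>l. initial_segment x l \<in> D \<alpha> k})" for \<alpha>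
  have "meager (Miss \<alpha>)" if "\<alpha> \<in> A" for \<alpha>
  proof -
    have "avoidable (- {x. \<exists>l. initial_segment x l \<in> D \<alpha> k})" for k
      unfolding avoidable_def
    proof
      fix s
      obtain u where "s @ u \<in> D \<alpha> k" using dense \<open>\<alpha> \<in> A\<close> by blast
      then have "x \<in> {x. \<exists>l. initial_segment x l \<in> D \<alpha> k}" if "x \<in> cylinder (s @ u)" for x
        using initial_segment_of_cylinder[OF that] by (metis mem_Collect_eq)
      then show "\<exists>u. cylinder (s @ u) \<inter> - {x. \<exists>l. initial_segment x l \<in> D \<alpha> k} = {}"
        by blast
    qed
    then show ?thesis
      unfolding meager_iff_avoidable Miss_def
      by (intro exI[of _ "\<lambda>k. - {x. \<exists>l. initial_segment x l \<in> D \<alpha> k}"]) auto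
  qed
  then have "meager (\<Union>\<alpha>\<in>A. Miss \<alpha>)"
    by (rule meager_UN_below_add_M[OF assms(1)])
  then obtain x where "x \<notin> (\<Union>\<alpha>\<in>A. Miss \<alpha>)"
    using not_meager_UNIV by (metis UNIV_eq_I)
  then show ?thesis unfolding Miss_def by blast
qed

lemma bounded_below_add_M:
  fixes f :: "'a \<Rightarrow> nat \<Rightarrow> nat" and A :: "'a set"
  assumes "below_add_M A"
  shows "\<exists>g. \<forall>\<alpha>\<in>A. \<forall>\<^sub>F k in sequentially. f \<alpha> k \<le> g k"
proof -
  define h where "h \<alpha> n = Suc n + (\<Sum>i\<le>n. f \<alpha> i)" for \<alpha> n
  have h_mono: "strict_mono (h \<alpha>)" for \<alpha>
    unfolding strict_mono_Suc_iff h_def by simp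
  have h_above: "n < h \<alpha> n" for \<alpha> n
    unfolding h_def by simp
  have f_le_h: "f \<alpha> n \<le> h \<alpha> n" for \<alpha> n
  proof -
    have "f \<alpha> n \<le> (\<Sum>i\<le>n. f \<alpha> i)"
      by (rule member_le_sum) auto
    then show ?thesis
      unfolding h_def by linarith
  qed
  have "meager (\<Union>\<alpha>\<in>A. true_in_intervals (h \<alpha>))"
    by (rule meager_UN_below_add_M[OF assms meager_true_in_intervals])
  then obtain N :: "nat \<Rightarrow> (nat \<Rightarrow> bool) set" where N: "\<And>n. avoidable (N n)" "(\<Union>\<alpha>\<in>A. true_in_intervals (h \<alpha>)) \<subseteq> (\<Union>n. N n)"
    unfolding meager_iff_avoidable by blast
  have "\<forall>\<^sub>F k in sequentially. f \<alpha> k \<le> block_start N (k + 2)" if "\<alpha> \<in> A" for \<alpha>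
  proof -
    have "true_in_intervals (h \<alpha>) \<subseteq> (\<Union>n. N n)"
      using N(2) that by blast
    from eventually_le_block_start[OF N(1) h_mono h_above this]
    show ?thesis
      by (rule eventually_mono) (use f_le_h le_trans in blast)
  qed
  then show ?thesis
    by (intro exI[of _ "\<lambda>k. block_start N (k + 2)"]) blast
qed

definition dense_open :: "bool list set \<Rightarrow> bool" where
  "dense_open D \<longleftrightarrow> (\<forall>s. \<exists>u. s @ u \<in> D) \<and> (\<forall>s u. s \<in> D \<longrightarrow> s @ u \<in> D)"

lemma eventually_in_dense_open_below_add_M:
  assumes "below_add_M A" and dense_open: "\<And>\<alpha> k. \<alpha> \<in> A \<Longrightarrow> dense_open (D \<alpha> k)"
  shows "\<exists>w. \<forall>\<alpha>\<in>A. \<forall>\<^sub>F k in sequentially. w k \<in> D \<alpha> k"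
proof -
  obtain x where x: "\<And>\<alpha> k. \<alpha> \<in> A \<Longrightarrow> \<exists>l. initial_segment x l \<in> D \<alpha> k"
    using generic_point_below_add_M[OF assms(1), of D] dense_open unfolding dense_open_def by metis
  define l where "l \<alpha> k = (LEAST l. initial_segment x l \<in> D \<alpha> k)" for \<alpha> k
  obtain g where g: "\<forall>\<alpha>\<in>A. \<forall>\<^sub>F k in sequentially. l \<alpha> k \<le> g k"
    using bounded_below_add_M[OF assms(1)] by blast
  have "initial_segment x (g k) \<in> D \<alpha> k" if "\<alpha> \<in> A" "l \<alpha> k \<le> g k" for \<alpha> k
  proof -
    have "initial_segment x (l \<alpha> k) \<in> D \<alpha> k"
      unfolding l_def using x[OF \<open>\<alpha> \<in> A\<close>] by (rule LeastI_ex)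
    moreover obtain u where "initial_segment x (g k) = initial_segment x (l \<alpha> k) @ u"
      using initial_segment_append[OF \<open>l \<alpha> k \<le> g k\<close>] by blast
    ultimately show ?thesis
      using dense_open[OF \<open>\<alpha> \<in> A\<close>] unfolding dense_open_def by metis
  qed
  then show ?thesis
    using g by (intro exI[of _ "\<lambda>k. initial_segment x (g k)"]) (blast intro: eventually_mono)
qed

section \<open>Almost disjoint families modulo nwd\<close>

definition dense_above :: "bool list \<Rightarrow> bool list set \<Rightarrow> bool" where
  "dense_above \<sigma> A \<longleftrightarrow> (\<forall>u. \<exists>v. \<sigma> @ u @ v \<in> A)"

lemma nwd_iff_not_dense_above: "A \<in> nwd \<longleftrightarrow> (\<forall>\<sigma>. \<not> dense_above \<sigma> A)"
  unfolding nwd_def dense_above_def by (auto; metis append.assoc)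

lemma finite_in_nwd:
  assumes "finite F" shows "F \<in> nwd"
  unfolding nwd_iff_not_dense_above dense_above_def
proof (intro allI notI)
  fix \<sigma> :: "bool list"
  define L where "L = Suc (\<Sum>\<rho>\<in>F. length \<rho>)"
  have short: "length \<rho> < L" if "\<rho> \<in> F" for \<rho>
    using member_le_sum[of \<rho> F length] that assms unfolding L_def by simp
  assume "\<forall>u. \<exists>v. \<sigma> @ u @ v \<in> F"
  then obtain v where "\<sigma> @ replicate L False @ v \<in> F" by blast
  then show False using short by fastforce
qed

lemma dense_open_avoiding_nwd:
  assumes "B \<in> nwd" shows "dense_open {u. \<forall>v. t @ u @ v \<notin> B}"
  unfolding dense_open_def
proof (intro conjI allI impI)
  fix s
  have "\<not> dense_above (t @ s) B"
    using assms nwd_iff_not_dense_above by blast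
  then show "\<exists>u. s @ u \<in> {u. \<forall>v. t @ u @ v \<notin> B}"
    unfolding dense_above_def by auto
qed simp

lemma finite_Int_range_if_eventually_notin:
  assumes "\<forall>\<^sub>F k in sequentially. \<rho> k \<notin> A"
  shows "finite (A \<inter> range \<rho>)"
proof -
  obtain K where "\<And>k. K \<le> k \<Longrightarrow> \<rho> k \<notin> A"
    using assms unfolding eventually_sequentially by blast
  then have "A \<inter> range \<rho> \<subseteq> \<rho> ` {..<K}"
    by (auto simp: not_less[symmetric])
  then show ?thesis by (rule finite_subset) simp
qed

lemma common_stem_of_uncountable:
  assumes "uncountable \<A>" "\<forall>A\<in>\<A>. A \<notin> nwd"
  shows "\<exists>\<sigma> (a :: nat \<Rightarrow> bool list set). inj a \<and> range a \<subseteq> \<A> \<and> (\<forall>k. dense_above \<sigma> (a k))"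
proof -
  define stem where "stem A = (SOME \<sigma>. dense_above \<sigma> A)" for A
  have stem: "dense_above (stem A) A" if "A \<in> \<A>" for A
    using assms(2) that unfolding stem_def nwd_iff_not_dense_above by (metis someI_ex)
  have "\<exists>\<sigma>. infinite {A\<in>\<A>. stem A = \<sigma>}"
  proof (rule ccontr)
    assume "\<not> ?thesis"
    then have "countable (\<Union>\<sigma>. {A\<in>\<A>. stem A = \<sigma>})"
      by (intro countable_UN) (auto intro: countable_finite)
    moreover have "(\<Union>\<sigma>. {A\<in>\<A>. stem A = \<sigma>}) = \<A>" by auto
    ultimately show False using assms(1) by simp
  qed
  then obtain \<sigma> where "infinite {A\<in>\<A>. stem A = \<sigma>}" ..
  from infinite_countable_subset[OF this]
  obtain a :: "nat \<Rightarrow> bool list set" where "inj a" "range a \<subseteq> {A\<in>\<A>. stem A = \<sigma>}"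
    by blast
  then have "inj a \<and> range a \<subseteq> \<A> \<and> (\<forall>k. dense_above \<sigma> (a k))"
    using stem by fastforce
  then show ?thesis by blast
qed

lemma eventually_neq_if_inj:
  assumes "inj a" shows "\<forall>\<^sub>F k in sequentially. a k \<noteq> A"
proof -
  have "finite (a -` {A})"
    using finite_vimageI[of "{A}" a] assms by simp
  then show ?thesis
    by (simp add: eventually_cofinite vimage_def flip: cofinite_eq_sequentially)
qed

lemma exists_dense_above_with_finite_Int:
  fixes a :: "nat \<Rightarrow> bool list set"
  assumes below: "below_add_M \<A>"
    and almost_disjoint: "\<And>A B. A \<in> \<A> \<Longrightarrow> B \<in> \<A> \<Longrightarrow> A \<noteq> B \<Longrightarrow> A \<inter> B \<in> nwd"
    and a: "inj a" "range a \<subseteq> \<A>" "\<And>k. dense_above \<sigma> (a k)"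
  shows "\<exists>B. dense_above \<sigma> B \<and> (\<forall>A\<in>\<A>. finite (A \<inter> B))"
proof -
  define D where
    "D A k = (if A = a k then UNIV else {u. \<forall>v. \<sigma> @ from_nat k @ u @ v \<notin> A \<inter> a k})" for A k
  have "dense_open (D A k)" if "A \<in> \<A>" for A k
  proof (cases "A = a k")
    case False
    have "a k \<in> \<A>" using a(2) by blast
    then have "A \<inter> a k \<in> nwd"
      by (rule almost_disjoint[OF that _ False])
    from dense_open_avoiding_nwd[OF this, of "\<sigma> @ from_nat k"]
    show ?thesis
      using False unfolding D_def by simp
  qed (simp add: D_def dense_open_def)
  then have "\<exists>w. \<forall>A\<in>\<A>. \<forall>\<^sub>F k in sequentially. w k \<in> D A k"
    by (rule eventually_in_dense_open_below_add_M[OF below])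
  then obtain w where w: "\<forall>A\<in>\<A>. \<forall>\<^sub>F k in sequentially. w k \<in> D A k" ..
  have "\<forall>k. \<exists>v. \<sigma> @ (from_nat k @ w k) @ v \<in> a k"
    using a(3) unfolding dense_above_def by blast
  then obtain v where v: "\<And>k. \<sigma> @ from_nat k @ w k @ v k \<in> a k"
    by (auto dest!: choice)
  define \<rho> where "\<rho> k = \<sigma> @ from_nat k @ w k @ v k" for k
  have "dense_above \<sigma> (range \<rho>)"
    unfolding dense_above_def
  proof
    fix u
    have "\<rho> (to_nat u) = \<sigma> @ u @ w (to_nat u) @ v (to_nat u)"
      by (simp add: \<rho>_def)
    then show "\<exists>v. \<sigma> @ u @ v \<in> range \<rho>"
      by (metis rangeI)
  qed
  moreover have "finite (A \<inter> range \<rho>)" if "A \<in> \<A>" for A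
  proof -
    have "\<forall>\<^sub>F k in sequentially. w k \<in> D A k"
      using w that by blast
    with eventually_neq_if_inj[OF a(1)]
    have "\<forall>\<^sub>F k in sequentially. \<rho> k \<notin> A"
    proof (rule eventually_elim2)
      fix k assume "a k \<noteq> A" "w k \<in> D A k"
      then show "\<rho> k \<notin> A"
        using v[of k] by (auto simp: D_def \<rho>_def)
    qed
    then show ?thesis by (rule finite_Int_range_if_eventually_notin)
  qed
  ultimately show ?thesis by blast
qed

theorem mainTheorem19:
  "\<forall>\<A>. uncountable_mad nwd \<A> \<longrightarrow>
      (\<exists>F. add_M_family F \<and> (card_of F, card_of \<A>) \<in> ordLeq)"
proof (intro allI impI)
  fix \<A> :: "bool list set set"
  assume "uncountable_mad nwd \<A>"
  then have uncountable: "uncountable \<A>" and positive: "\<forall>A\<in>\<A>. A \<notin> nwd"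
    and almost_disjoint: "\<And>A B. A \<in> \<A> \<Longrightarrow> B \<in> \<A> \<Longrightarrow> A \<noteq> B \<Longrightarrow> A \<inter> B \<in> nwd"
    and maximal: "\<And>B. B \<notin> nwd \<Longrightarrow> B \<notin> \<A> \<Longrightarrow> \<exists>A\<in>\<A>. A \<inter> B \<notin> nwd"
    unfolding uncountable_mad_def by blast+
  show "\<exists>F. add_M_family F \<and> (card_of F, card_of \<A>) \<in> ordLeq"
  proof (rule ccontr)
    assume "\<not> ?thesis"
    then have below: "below_add_M \<A>"
      unfolding below_add_M_def add_M_family_def by blast
    obtain \<sigma> and a :: "nat \<Rightarrow> bool list set"
      where a: "inj a" "range a \<subseteq> \<A>" "\<And>k. dense_above \<sigma> (a k)"
      using common_stem_of_uncountable[OF uncountable positive] by blast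
    obtain B where B: "dense_above \<sigma> B" "\<And>A. A \<in> \<A> \<Longrightarrow> finite (A \<inter> B)"
      using exists_dense_above_with_finite_Int[OF below almost_disjoint a] by blast
    then have "B \<notin> nwd" and "B \<notin> \<A>"
      using nwd_iff_not_dense_above finite_in_nwd by (metis Int_absorb)+
    with maximal B(2) finite_in_nwd show False
      by blast
  qed
qed

end
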